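(* Let $d\ge2$ and $\tilde m>0$. There is a map $R:\mathbb R^{6d-3}\to\mathcal P_d$ (depending only on $d$ and $\tilde m$) such that the following holds. Let $p\in\mathcal P_d$ be nonzero and $\epsilon\in\mathbb R^{6d-3}$, and suppose there exists $z_0\in\mathbb T$ with $$\min_{1\le j\le d}\Big(|p(\nu^jz_0)|^2-(2d-1)\|\epsilon\|_\infty\Big)\ge\tilde m\|p\|_2^2.$$ Let $\tilde C=\frac{(1+\sqrt2)\sqrt d(2d-1)\|\epsilon\|_\infty+d\|p\|_2^2}{\sqrt d\,\tilde m\|p\|_2^2}$. Then $\tilde p=R(\widetilde{\mathcal A}(p,\epsilon))$ satisfies, for some $c_0\in\mathbb T$, $$\|\tilde p-c_0p\|_2\le\left(\frac{2+\sqrt2}{\tilde m}\,\frac{d-d\tilde C-1+\tilde C^d}{1-\tilde C}\sqrt d+\frac{1-\tilde C^d}{2\sqrt{\frac{\tilde m}{\sqrt d}}}\right)\frac{d(2d-1)}{1-\tilde C}\,\frac{\|\epsilon\|_\infty}{\|p\|_2}.$$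
   Context: $\mathbb T$ is the unit circle. $\mathcal P_d$ is the space of complex polynomials of degree at most $d-1$ with inner product $\langle p,q\rangle=\frac1{2\pi}\int_0^{2\pi}p(e^{it})\overline{q(e^{it})}dt$, so $\|p\|_2$ is the Euclidean norm of the coefficient vector. Let $\omega=e^{2\pi i/(2d-1)}$, $\nu=e^{2\pi i/d}$. The map $\mathcal A:\mathcal P_d\to\mathbb R^{6d-3}$ is $(\mathcal A(p))_j=|p(\omega^j)|^2$ ($1\le j\le 2d-1$), $|p(\omega^j)-p(\omega^j\nu)|^2$ ($2d\le j\le4d-2$), $|p(\omega^j)-ip(\omega^j\nu)|^2$ ($4d-1\le j\le 6d-3$), and $\widetilde{\mathcal A}(p,\epsilon)=\mathcal A(p)+\epsilon$; $\|\epsilon\|_\infty=\max_j|\epsilon_j|$. *)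

theory Defs
  imports "HOL-Analysis.Analysis" "HOL-Computational_Algebra.Polynomial"
begin

definition Pd :: "nat \<Rightarrow> complex poly set" where
  "Pd d = {p. degree p < d}"

text \<open>Euclidean norm of the coefficient vector (= L2 norm on the unit circle).\<close>
definition norm2 :: "nat \<Rightarrow> complex poly \<Rightarrow> real" where
  "norm2 d p = sqrt (\<Sum>k<d. (cmod (coeff p k))\<^sup>2)"

definition omega :: "nat \<Rightarrow> complex" where
  "omega d = cis (2 * pi / real (2 * d - 1))"

definition nu :: "nat \<Rightarrow> complex" where
  "nu d = cis (2 * pi / real d)"

text \<open>Measurement map A : P_d -> R^(6d-3); vectors are indexed by 1..6d-3 and
  are extended by 0 outside that range.\<close>
definition measA :: "nat \<Rightarrow> complex poly \<Rightarrow> nat \<Rightarrow> real" where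
  "measA d p j =
    (if 1 \<le> j \<and> j \<le> 2*d - 1 then (cmod (poly p (omega d ^ j)))\<^sup>2
     else if 2*d \<le> j \<and> j \<le> 4*d - 2 then
       (cmod (poly p (omega d ^ j) - poly p (omega d ^ j * nu d)))\<^sup>2
     else if 4*d - 1 \<le> j \<and> j \<le> 6*d - 3 then
       (cmod (poly p (omega d ^ j) - \<i> * poly p (omega d ^ j * nu d)))\<^sup>2
     else 0)"

definition measA_noisy :: "nat \<Rightarrow> complex poly \<Rightarrow> (nat \<Rightarrow> real) \<Rightarrow> nat \<Rightarrow> real" where
  "measA_noisy d p eps j =
    (if 1 \<le> j \<and> j \<le> 6*d - 3 then measA d p j + eps j else 0)"

definition sup_norm :: "nat \<Rightarrow> (nat \<Rightarrow> real) \<Rightarrow> real" where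
  "sup_norm d eps = Max ((\<lambda>j. \<bar>eps j\<bar>) ` {1..6*d - 3})"

end

theory Submission
  imports Defs
begin

(* For p of degree < d, z ^ (d - 1) * |p z|^2 is on the unit circle a polynomial of degree at most 2d - 2, so
   the 2d - 1 noisy samples |p (omega^j)|^2 + eps_j determine |p|^2 on the whole circle by interpolation, up to
   (2d - 1) ||eps||; the same holds for |p z - p (nu z)|^2 and |p z - i p (nu z)|^2, and polarization then
   estimates p z * cnj (p (nu z)) up to (1 + sqrt 2) times that error.
   The reconstruction picks a point z1 maximizing the smallest estimated intensity on the orbit nu^j z1, takes
   the moduli of p on the orbit from the estimated intensities and the relative phases from the estimated
   products p (nu^j z1) * cnj (p (nu^(j+1) z1)), and recovers the coefficients by the inverse discrete Fourier
   transform on the orbit. The hypothesis makes the values of p on the orbit large compared with the noise,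
   so the phase errors grow at most linearly along the orbit, which gives the bound; if the noise is too large
   for this, a crude bound suffices. *)

lemma norm_sgn_diff_le:
  fixes a b :: complex
  assumes "b \<noteq> 0"
  shows "cmod (sgn a - sgn b) \<le> 2 * cmod (a - b) / cmod b"
proof (cases "a = 0")
  case True
  then show ?thesis using assms by (simp add: norm_sgn)
next
  case False
  have "sgn a - sgn b = (1 / cmod a - 1 / cmod b) *\<^sub>R a + (1 / cmod b) *\<^sub>R (a - b)"
    by (simp add: sgn_div_norm divide_inverse scaleR_diff_right scaleR_diff_left)
  then have "cmod (sgn a - sgn b) \<le> \<bar>1 / cmod a - 1 / cmod b\<bar> * cmod a + cmod (a - b) / cmod b"
    using norm_triangle_ineq[of "(1 / cmod a - 1 / cmod b) *\<^sub>R a" "(1 / cmod b) *\<^sub>R (a - b)"] by simp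
  also have "\<bar>1 / cmod a - 1 / cmod b\<bar> * cmod a = \<bar>cmod b - cmod a\<bar> / cmod b"
    using False assms by (simp add: field_simps abs_div)
  also have "\<dots> \<le> cmod (a - b) / cmod b"
    by (intro divide_right_mono) (auto simp: norm_triangle_ineq3 abs_minus_commute)
  finally show ?thesis by simp
qed

lemma norm_sgn_cnj_diff_le:
  fixes a b :: complex
  assumes "\<mu> > 0" "\<mu> \<le> cmod b" "cmod (a - b) \<le> e"
  shows "cmod (sgn (cnj a) - sgn (cnj b)) \<le> 2 * e / \<mu>"
proof -
  have "b \<noteq> 0" using assms(1,2) by auto
  then have "cmod (sgn (cnj a) - sgn (cnj b)) \<le> 2 * cmod (a - b) / cmod b"
    using norm_sgn_diff_le[of "cnj b" "cnj a"] by (simp flip: complex_cnj_diff)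
  also have "\<dots> \<le> 2 * e / \<mu>"
    using assms norm_ge_zero[of "a - b"] by (intro frac_le) linarith+
  finally show ?thesis .
qed

lemma abs_sqrt_diff_le:
  fixes a b :: real
  assumes "a > 0" "b \<ge> 0"
  shows "\<bar>sqrt a - sqrt b\<bar> \<le> \<bar>a - b\<bar> / sqrt a"
proof -
  have "a - b = (sqrt a - sqrt b) * (sqrt a + sqrt b)"
    using assms by (simp add: algebra_simps)
  then have "\<bar>a - b\<bar> = \<bar>sqrt a - sqrt b\<bar> * (sqrt a + sqrt b)"
    using assms by (simp add: abs_mult)
  also have "\<dots> \<ge> \<bar>sqrt a - sqrt b\<bar> * sqrt a" using assms by (intro mult_left_mono) auto
  finally show ?thesis using assms by (simp add: le_divide_eq)
qed

lemma norm_mult_diff_mult_le: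
  fixes a b x y :: "'a::real_normed_field"
  shows "norm (a * x - b * y) \<le> norm (a - b) * norm x + norm b * norm (x - y)"
proof -
  have "a * x - b * y = (a - b) * x + b * (x - y)" by (simp add: algebra_simps)
  then show ?thesis by (metis norm_mult norm_triangle_ineq)
qed

lemma sgn_cnj_sgn_mult_self:
  assumes "a \<noteq> 0" shows "sgn (cnj (sgn a) * a) = 1"
proof -
  have "cnj (sgn a) * a = of_real (cmod a)"
    using assms by (simp add: sgn_eq complex_norm_square[symmetric] power2_eq_square field_simps)
  then show ?thesis using assms by (simp add: sgn_of_real)
qed

lemma cnj_mult_self_of_norm_1: "cmod z = 1 \<Longrightarrow> z * cnj z = 1"
  by (metis complex_norm_square of_real_1 one_power2)

lemma sgn_mult_eq_sgn_cross_mult: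
  fixes a b c :: complex
  assumes "a \<noteq> 0"
  shows "sgn (c * b) = sgn (cnj (a * cnj b)) * sgn (c * a)"
proof -
  have "cnj (a * cnj b) * (c * a) = of_real ((cmod a)\<^sup>2) * (c * b)"
    unfolding complex_norm_square by (simp add: mult_ac)
  moreover have "(cmod a)\<^sup>2 > 0" using assms by simp
  ultimately have "sgn (cnj (a * cnj b) * (c * a)) = sgn (c * b)"
    by (simp only: sgn_mult sgn_of_real) simp
  then show ?thesis by (simp only: sgn_mult)
qed

lemma real_sum_lessThan_id: "(\<Sum>i<n. real i) = real n * (real n - 1) / 2"
  by (induction n) (simp_all add: field_simps)

lemma continuous_on_Min_family:
  fixes f :: "'i \<Rightarrow> 'a::topological_space \<Rightarrow> 'b::linorder_topology"
  assumes "finite I" "I \<noteq> {}" "\<And>i. i \<in> I \<Longrightarrow> continuous_on S (f i)"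
  shows "continuous_on S (\<lambda>z. Min ((\<lambda>i. f i z) ` I))"
  using assms
proof (induction I rule: finite_ne_induct)
  case (insert x F)
  then have "continuous_on S (\<lambda>z. min (f x z) (Min ((\<lambda>i. f i z) ` F)))"
    by (intro continuous_intros) auto
  then show ?case using insert by (simp add: Min_insert)
qed simp

lemma one_plus_power_ge_quadratic:
  fixes h :: real
  assumes "h \<ge> 0"
  shows "(1 + h) ^ k \<ge> 1 + real k * h + real k * (real k - 1) / 2 * h\<^sup>2"
proof (induction k)
  case (Suc k)
  have "(1 + h) * (1 + real k * h + real k * (real k - 1) / 2 * h\<^sup>2)
      = 1 + real (Suc k) * h + real (Suc k) * (real (Suc k) - 1) / 2 * h\<^sup>2 + real k * (real k - 1) / 2 * h ^ 3"
    by (simp add: field_simps power2_eq_square power3_eq_cube)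
  moreover have "real k * (real k - 1) / 2 * h ^ 3 \<ge> 0" using assms by (cases k) auto
  moreover have "(1 + h) ^ Suc k \<ge> (1 + h) * (1 + real k * h + real k * (real k - 1) / 2 * h\<^sup>2)"
    using Suc assms by (simp add: mult_left_mono)
  ultimately show ?case by linarith
qed simp

lemma mod_eq_add_mod_iff:
  fixes a b k N :: nat
  assumes "a < N" "b \<le> a" "k < N"
  shows "a mod N = (b + k) mod N \<longleftrightarrow> k = a - b"
  using assms by (auto simp: mod_if le_mod_geq)

lemma dvd_add_pred_mult_iff:
  fixes a b M :: nat
  assumes "M > 0"
  shows "M dvd a + (M - 1) * b \<longleftrightarrow> a mod M = b mod M"
proof -
  obtain M' where M: "M = Suc M'" using assms not0_implies_Suc by blast
  have "int (a + (M - 1) * b) = (int a - int b) + int b * int M"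
    unfolding M by (simp add: algebra_simps)
  then have "M dvd a + (M - 1) * b \<longleftrightarrow> int M dvd int a - int b"
    by (metis dvd_add_times_triv_right_iff int_dvd_int_iff)
  also have "\<dots> \<longleftrightarrow> a mod M = b mod M" by (metis mod_eq_dvd_iff of_nat_eq_iff of_nat_mod)
  finally show ?thesis .
qed

section \<open>Roots of unity\<close>

lemma cis_root_power_eq_1_iff:
  fixes M k :: nat
  assumes "M > 0"
  shows "cis (2*pi/M) ^ k = 1 \<longleftrightarrow> M dvd k"
proof -
  have "cis (2*pi/M) ^ k = cis (real k * (2*pi/M))" by (rule Complex.DeMoivre)
  also have "\<dots> = exp (2 * of_real pi * \<i> * of_nat k / of_nat M)"
    unfolding cis_conv_exp by (simp add: field_simps)
  also have "\<dots> = exp (2 * of_real pi * \<i> * of_nat 0 / of_nat M) \<longleftrightarrow> k mod M = 0 mod M"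
    using assms by (intro complex_root_unity_eq) simp
  finally show ?thesis by (simp add: dvd_eq_mod_eq_0)
qed

lemma sum_cis_root_orthogonal:
  fixes M a b :: nat
  assumes M: "M > 0"
  shows "(\<Sum>i<M. (cis (2*pi/M) ^ (i+1)) ^ a * cnj ((cis (2*pi/M) ^ (i+1)) ^ b))
         = (if a mod M = b mod M then of_nat M else 0)"
proof -
  define \<zeta> where "\<zeta> = cis (2*pi/M)"
  define u where "u = \<zeta> ^ (a + (M - 1) * b)"
  have \<zeta>M: "\<zeta> ^ M = 1" using cis_root_power_eq_1_iff[OF M, of M] unfolding \<zeta>_def by simp
  have "cnj \<zeta> = \<zeta> ^ (M - 1)"
    using \<zeta>M M by (metis \<zeta>_def cis_cnj cis_inverse diff_Suc_1 gr0_implies_Suc inverse_unique power_Suc)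
  then have summand: "(\<zeta> ^ (i+1)) ^ a * cnj ((\<zeta> ^ (i+1)) ^ b) = u ^ (i+1)" for i
    unfolding u_def by (simp add: power_add power_mult_distrib power_mult[symmetric] mult_ac)
  have "u ^ M = 1" unfolding u_def by (metis \<zeta>M power_mult power_mult_distrib power_one mult.commute)
  then have "(\<Sum>i<M. u ^ (i+1)) = (if u = 1 then of_nat M else 0)"
    by (simp add: geometric_sum sum_distrib_left[symmetric])
  moreover have "u = 1 \<longleftrightarrow> a mod M = b mod M"
    unfolding u_def \<zeta>_def cis_root_power_eq_1_iff[OF M] by (rule dvd_add_pred_mult_iff[OF M])
  ultimately show ?thesis unfolding summand[unfolded \<zeta>_def] by (simp add: \<zeta>_def)
qed

lemma norm_omega [simp]: "cmod (omega d) = 1"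
  unfolding omega_def by simp

lemma norm_nu [simp]: "cmod (nu d) = 1"
  unfolding nu_def by simp

lemma omega_power_period: "d > 0 \<Longrightarrow> omega d ^ (2*d - 1) = 1"
  unfolding omega_def by (subst cis_root_power_eq_1_iff) auto

lemma poly_eq_sum_lessThan:
  fixes P :: "'a::comm_semiring_1 poly"
  assumes "degree P < d"
  shows "poly P x = (\<Sum>a<d. coeff P a * x^a)"
proof -
  have "poly P x = (\<Sum>a\<le>degree P. coeff P a * x^a)" by (rule poly_altdef)
  also have "\<dots> = (\<Sum>a<d. coeff P a * x^a)"
    by (rule sum.mono_neutral_left) (use assms in \<open>auto simp: coeff_eq_0\<close>)
  finally show ?thesis .
qed

lemma cmod_poly_squared_eq_double_sum:
  fixes P :: "complex poly"
  assumes "degree P < d"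
  shows "of_real ((cmod (poly P y))\<^sup>2) = (\<Sum>a<d. \<Sum>b<d. coeff P a * cnj (coeff P b) * (y ^ a * cnj (y ^ b)))"
proof -
  have "of_real ((cmod (poly P y))\<^sup>2) = poly P y * cnj (poly P y)" by (rule complex_norm_square)
  also have "\<dots> = (\<Sum>a<d. coeff P a * y^a) * (\<Sum>b<d. cnj (coeff P b * y^b))"
    by (simp add: poly_eq_sum_lessThan[OF assms])
  finally show ?thesis by (simp add: sum_product mult_ac)
qed

lemma sum_weighted_cmod_poly_squared:
  fixes P :: "complex poly"
  assumes "degree P < d"
  shows "(\<Sum>j\<in>J. of_real ((cmod (poly P (x j)))\<^sup>2) * w j)
    = (\<Sum>a<d. \<Sum>b<d. coeff P a * cnj (coeff P b) * (\<Sum>j\<in>J. x j ^ a * cnj (x j ^ b) * w j))"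
  unfolding cmod_poly_squared_eq_double_sum[OF assms]
  by (simp add: sum_distrib_left sum_distrib_right mult_ac sum.swap[of _ J])

lemma norm2_squared: "(norm2 d P)\<^sup>2 = (\<Sum>k<d. (cmod (coeff P k))\<^sup>2)"
  unfolding norm2_def by (simp add: sum_nonneg)

lemma norm2_le_sqrt_mult:
  assumes "\<beta> \<ge> 0" and "\<And>l. l < d \<Longrightarrow> cmod (coeff P l) \<le> \<beta>"
  shows "norm2 d P \<le> sqrt (real d) * \<beta>"
proof -
  have "(\<Sum>k<d. (cmod (coeff P k))\<^sup>2) \<le> (\<Sum>k<d. \<beta>\<^sup>2)"
    by (intro sum_mono power_mono) (auto intro: assms)
  then have "norm2 d P \<le> sqrt (real d * \<beta>\<^sup>2)"
    unfolding norm2_def by (simp add: real_sqrt_le_mono)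
  then show ?thesis using assms(1) by (simp add: real_sqrt_mult)
qed

lemma norm2_diff_le: "norm2 d (P - Q) \<le> norm2 d P + norm2 d Q"
proof -
  have norm2_L2_set: "norm2 d R = L2_set (\<lambda>k. cmod (coeff R k)) {..<d}" for R
    unfolding norm2_def L2_set_def ..
  have "norm2 d (P - Q) \<le> L2_set (\<lambda>k. cmod (coeff P k) + cmod (coeff Q k)) {..<d}"
    unfolding norm2_L2_set by (rule L2_set_mono) (auto intro: norm_triangle_ineq4)
  also have "\<dots> \<le> norm2 d P + norm2 d Q"
    unfolding norm2_L2_set by (rule L2_set_triangle_ineq)
  finally show ?thesis .
qed

lemma norm2_pos: "P \<noteq> 0 \<Longrightarrow> degree P < d \<Longrightarrow> norm2 d P > 0"
  unfolding norm2_def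
  by (intro real_sqrt_gt_zero sum_pos2[of _ "degree P"]) auto

section \<open>Discrete Fourier analysis on an orbit of the d-th roots of unity\<close>

definition orbit :: "nat \<Rightarrow> complex \<Rightarrow> nat \<Rightarrow> complex" where
  "orbit d z i = nu d ^ (i + 1) * z"

lemma norm_orbit: "cmod z = 1 \<Longrightarrow> cmod (orbit d z i) = 1"
  unfolding orbit_def by (simp add: norm_mult norm_power)

lemma nu_mult_orbit: "nu d * orbit d z i = orbit d z (Suc i)"
  unfolding orbit_def by simp

lemma orbit_last: "d > 0 \<Longrightarrow> orbit d z (d - 1) = z"
  unfolding orbit_def nu_def using cis_root_power_eq_1_iff[of d d] by simp

lemma sum_orbit_orthogonal:
  assumes "d > 0" "cmod z = 1" "a < d" "b < d"
  shows "(\<Sum>i<d. orbit d z i ^ a * cnj (orbit d z i) ^ b) = (if a = b then of_nat d else 0)"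
proof -
  have "(\<Sum>i<d. orbit d z i ^ a * cnj (orbit d z i) ^ b)
      = z ^ a * cnj (z ^ b) * (\<Sum>i<d. (nu d^(i+1))^a * cnj ((nu d^(i+1))^b))"
    unfolding orbit_def by (simp add: sum_distrib_left power_mult_distrib mult_ac)
  also have "(\<Sum>i<d. (nu d^(i+1))^a * cnj ((nu d^(i+1))^b)) = (if a = b then of_nat d else 0)"
    unfolding nu_def using sum_cis_root_orthogonal[of d a b] assms by simp
  also have "z ^ a * cnj (z ^ a) = 1"
    using cnj_mult_self_of_norm_1[of "z ^ a"] assms(2) by (simp add: norm_power)
  ultimately show ?thesis by (cases "a = b") simp_all
qed

lemma parseval_orbit:
  fixes P :: "complex poly"
  assumes "d > 0" "degree P < d" "cmod z = 1"
  shows "(\<Sum>i<d. (cmod (poly P (orbit d z i)))\<^sup>2) = real d * (norm2 d P)\<^sup>2"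
proof -
  have "of_real (\<Sum>i<d. (cmod (poly P (orbit d z i)))\<^sup>2)
      = (\<Sum>a<d. \<Sum>b<d. coeff P a * cnj (coeff P b) * (if a = b then of_nat d else 0))"
    using sum_weighted_cmod_poly_squared[OF assms(2), of "orbit d z" "\<lambda>_. 1" "{..<d}"]
    by (simp add: sum_orbit_orthogonal[OF assms(1,3)])
  also have "\<dots> = (\<Sum>a<d. of_nat d * (coeff P a * cnj (coeff P a)))"
    by (simp add: if_distrib mult_ac cong: if_cong)
  also have "\<dots> = of_real (real d * (norm2 d P)\<^sup>2)"
    by (simp only: norm2_squared of_real_mult of_real_sum complex_norm_square sum_distrib_left
        of_real_of_nat_eq)
  finally show ?thesis by (simp only: of_real_eq_iff)
qed

lemma cmod_poly_squared_le:
  fixes P :: "complex poly"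
  assumes "d > 0" "degree P < d" "cmod z = 1"
  shows "(cmod (poly P z))\<^sup>2 \<le> real d * (norm2 d P)\<^sup>2"
proof -
  have "(cmod (poly P (orbit d z (d - 1))))\<^sup>2 \<le> (\<Sum>i<d. (cmod (poly P (orbit d z i)))\<^sup>2)"
    by (rule member_le_sum) (use assms(1) in auto)
  then show ?thesis using parseval_orbit[OF assms] orbit_last[OF assms(1)] by simp
qed

lemma orbit_lower_bound_le_norm2_squared:
  fixes p :: "complex poly"
  assumes "d > 0" "degree p < d" "cmod z = 1" "\<And>i. i < d \<Longrightarrow> s \<le> (cmod (poly p (orbit d z i)))\<^sup>2"
  shows "s \<le> (norm2 d p)\<^sup>2"
proof -
  have "real d * s \<le> (\<Sum>i<d. (cmod (poly p (orbit d z i)))\<^sup>2)"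
    using sum_mono[of "{..<d}" "\<lambda>_. s"] assms(4) by simp
  then show ?thesis using parseval_orbit[OF assms(1-3)] assms(1) by simp
qed

(* The inverse discrete Fourier transform on the orbit: the polynomial of degree < d with values v i at orbit d z i. *)
definition orbit_interp_poly :: "nat \<Rightarrow> complex \<Rightarrow> (nat \<Rightarrow> complex) \<Rightarrow> complex poly" where
  "orbit_interp_poly d z v =
     (\<Sum>l<d. monom ((1 / of_nat d) * (\<Sum>i<d. v i * cnj (orbit d z i ^ l))) l)"

lemma coeff_orbit_interp_poly:
  "coeff (orbit_interp_poly d z v) l =
     (if l < d then (1 / of_nat d) * (\<Sum>i<d. v i * cnj (orbit d z i ^ l)) else 0)"
  unfolding orbit_interp_poly_def by (simp add: coeff_sum coeff_monom)

lemma degree_orbit_interp_poly: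
  assumes "d > 0" shows "degree (orbit_interp_poly d z v) < d"
proof -
  have "degree (orbit_interp_poly d z v) \<le> d - 1"
    by (rule degree_le) (simp add: coeff_orbit_interp_poly)
  then show ?thesis using assms by linarith
qed

lemma orbit_interp_poly_diff:
  "orbit_interp_poly d z (\<lambda>i. v i - c * w i)
     = orbit_interp_poly d z v - smult c (orbit_interp_poly d z w)"
  by (rule poly_eqI)
     (simp add: coeff_orbit_interp_poly algebra_simps sum_subtractf sum_distrib_left)

lemma orbit_interp_poly_of_values:
  fixes P :: "complex poly"
  assumes "d > 0" "degree P < d" "cmod z = 1"
  shows "orbit_interp_poly d z (\<lambda>i. poly P (orbit d z i)) = P"
proof (rule poly_eqI)
  fix l
  show "coeff (orbit_interp_poly d z (\<lambda>i. poly P (orbit d z i))) l = coeff P l"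
  proof (cases "l < d")
    case True
    have "(\<Sum>i<d. poly P (orbit d z i) * cnj (orbit d z i ^ l))
        = (\<Sum>a<d. coeff P a * (\<Sum>i<d. orbit d z i ^ a * cnj (orbit d z i ^ l)))"
      unfolding poly_eq_sum_lessThan[OF assms(2)] sum_distrib_right sum_distrib_left
      by (subst sum.swap) (simp add: mult_ac)
    also have "\<dots> = of_nat d * coeff P l"
      using True by (simp add: sum_orbit_orthogonal[OF assms(1,3)] if_distrib cong: if_cong)
    finally show ?thesis using True assms(1) by (simp add: coeff_orbit_interp_poly)
  qed (use assms(2) in \<open>simp add: coeff_orbit_interp_poly coeff_eq_0\<close>)
qed

lemma norm2_orbit_interp_poly_le:
  assumes "d > 0" "cmod z = 1"
  shows "norm2 d (orbit_interp_poly d z v) \<le> (\<Sum>i<d. cmod (v i)) / sqrt (real d)"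
proof -
  have "cmod (coeff (orbit_interp_poly d z v) l) \<le> (\<Sum>i<d. cmod (v i)) / real d" for l
  proof -
    have "cmod (\<Sum>i<d. v i * cnj (orbit d z i ^ l)) \<le> (\<Sum>i<d. cmod (v i))"
      using norm_sum[of "\<lambda>i. v i * cnj (orbit d z i ^ l)" "{..<d}"] assms(2)
      by (simp add: norm_mult norm_power norm_orbit)
    then show ?thesis
      by (auto simp: coeff_orbit_interp_poly norm_mult norm_divide divide_right_mono sum_nonneg)
  qed
  then have "norm2 d (orbit_interp_poly d z v) \<le> sqrt (real d) * ((\<Sum>i<d. cmod (v i)) / real d)"
    by (intro norm2_le_sqrt_mult) (auto simp: sum_nonneg)
  also have "\<dots> = (\<Sum>i<d. cmod (v i)) / sqrt (real d)"
    using real_sqrt_mult_self[of "real d"] assms(1) by (simp add: field_simps)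
  finally show ?thesis .
qed

section \<open>Interpolation of intensities on the circle\<close>

definition circle_point :: "nat \<Rightarrow> nat \<Rightarrow> complex" where
  "circle_point d j = omega d ^ (j + 1)"

(* For degree P < d, z ^ (d - 1) * |P z|^2 is on the circle a polynomial of degree at most 2d - 2, so it is
   determined by its values at the 2d - 1 points circle_point d j; circle_kernel is the Lagrange basis. *)
definition circle_kernel :: "nat \<Rightarrow> nat \<Rightarrow> complex \<Rightarrow> complex" where
  "circle_kernel d j z = (1 / of_nat (2*d - 1)) * (\<Sum>k<2*d - 1. z ^ k * cnj (circle_point d j ^ k))
     * (cnj z ^ (d - 1) * circle_point d j ^ (d - 1))"

lemma norm_circle_point [simp]: "cmod (circle_point d j) = 1"
  unfolding circle_point_def by (simp add: norm_mult norm_power)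

lemma sum_circle_kernel_monomial:
  assumes "d > 0" "a < d" "b < d" "cmod z = 1"
  shows "(\<Sum>j<2*d - 1. circle_point d j ^ a * cnj (circle_point d j) ^ b * circle_kernel d j z)
    = z ^ a * cnj z ^ b"
proof -
  define N where "N = 2*d - 1"
  define x where "x = circle_point d"
  define c where "c = d - 1"
  define k0 where "k0 = a + c - b"
  have N: "N > 0" "a + c < N" "k0 < N" using assms unfolding N_def k0_def c_def by auto
  have orth: "(\<Sum>j<N. x j ^ (a + c) * cnj (x j) ^ (b + k)) = (if k = k0 then of_nat N else 0)"
    if "k < N" for k
    using sum_cis_root_orthogonal[OF N(1), of "a + c" "b + k"] mod_eq_add_mod_iff[OF N(2), of b k] assms that
    unfolding x_def circle_point_def omega_def N_def[symmetric] k0_def c_def by auto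
  have "(\<Sum>j<N. x j ^ a * cnj (x j) ^ b * circle_kernel d j z)
      = (\<Sum>j<N. \<Sum>k<N. (1 / of_nat N) * (z ^ k * cnj z ^ c) * (x j ^ (a + c) * cnj (x j) ^ (b + k)))"
    unfolding circle_kernel_def x_def N_def[symmetric] c_def[symmetric]
    by (simp add: sum_distrib_left sum_distrib_right power_add mult_ac)
  also have "\<dots> = (\<Sum>k<N. (1 / of_nat N) * (z ^ k * cnj z ^ c) * (\<Sum>j<N. x j ^ (a + c) * cnj (x j) ^ (b + k)))"
    by (subst sum.swap) (simp add: sum_distrib_left)
  also have "\<dots> = (\<Sum>k<N. (1 / of_nat N) * (z ^ k * cnj z ^ c) * (if k = k0 then of_nat N else 0))"
    by (intro sum.cong refl) (simp add: orth)
  also have "\<dots> = z ^ k0 * cnj z ^ c"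
    using N by (simp add: if_distrib cong: if_cong)
  also have "\<dots> = z ^ a * cnj z ^ b"
  proof -
    have "z ^ (c - b) * cnj z ^ (c - b) = 1"
      using cnj_mult_self_of_norm_1[of "z ^ (c - b)"] assms(4) by (simp add: norm_power)
    moreover have "z ^ k0 = z ^ a * z ^ (c - b)" "cnj z ^ c = cnj z ^ (c - b) * cnj z ^ b"
      using assms(3) unfolding k0_def c_def by (simp_all add: power_add[symmetric])
    ultimately show ?thesis by (metis mult.assoc mult.commute mult.right_neutral)
  qed
  finally show ?thesis unfolding x_def N_def .
qed

lemma circle_kernel_interpolates:
  fixes P :: "complex poly"
  assumes "d > 0" "degree P < d" "cmod z = 1"
  shows "(\<Sum>j<2*d - 1. of_real ((cmod (poly P (circle_point d j)))\<^sup>2) * circle_kernel d j z)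
    = of_real ((cmod (poly P z))\<^sup>2)"
proof -
  have "(\<Sum>j<2*d - 1. of_real ((cmod (poly P (circle_point d j)))\<^sup>2) * circle_kernel d j z)
    = (\<Sum>a<d. \<Sum>b<d. coeff P a * cnj (coeff P b)
        * (\<Sum>j<2*d - 1. circle_point d j ^ a * cnj (circle_point d j ^ b) * circle_kernel d j z))"
    by (rule sum_weighted_cmod_poly_squared[OF assms(2)])
  also have "\<dots> = (\<Sum>a<d. \<Sum>b<d. coeff P a * cnj (coeff P b) * (z ^ a * cnj (z ^ b)))"
    by (intro sum.cong refl) (use sum_circle_kernel_monomial[OF assms(1) _ _ assms(3)] in simp)
  also have "\<dots> = of_real ((cmod (poly P z))\<^sup>2)"
    by (rule cmod_poly_squared_eq_double_sum[OF assms(2), symmetric])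
  finally show ?thesis .
qed

lemma norm_circle_kernel_le_1:
  assumes "d > 0" "cmod z = 1"
  shows "cmod (circle_kernel d j z) \<le> 1"
proof -
  define N where "N = 2*d - 1"
  have "cmod (\<Sum>k<N. z ^ k * cnj ((circle_point d j) ^ k)) \<le> real N"
    using norm_sum[of "\<lambda>k. z ^ k * cnj ((circle_point d j) ^ k)" "{..<N}"] assms(2)
    by (simp add: norm_mult norm_power)
  moreover have "N > 0" using assms(1) unfolding N_def by simp
  ultimately show ?thesis
    unfolding circle_kernel_def N_def[symmetric] using assms(2)
    by (simp add: norm_mult norm_power norm_divide field_simps)
qed

definition circle_interp :: "nat \<Rightarrow> (nat \<Rightarrow> real) \<Rightarrow> nat \<Rightarrow> complex \<Rightarrow> real" where
  "circle_interp d b off z = Re (\<Sum>j<2*d - 1. of_real (b (off + j + 1)) * circle_kernel d j z)"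

lemma circle_interp_error:
  fixes P :: "complex poly"
  assumes "d > 0" "degree P < d" "cmod z = 1"
    and "\<And>j. j < 2*d - 1 \<Longrightarrow> \<bar>b (off + j + 1) - (cmod (poly P (circle_point d j)))\<^sup>2\<bar> \<le> e"
  shows "\<bar>circle_interp d b off z - (cmod (poly P z))\<^sup>2\<bar> \<le> real (2*d - 1) * e"
proof -
  define w where "w = (\<Sum>j<2*d - 1. of_real (b (off + j + 1) - (cmod (poly P (circle_point d j)))\<^sup>2)
    * circle_kernel d j z)"
  have "e \<ge> 0" using assms(1) assms(4)[of 0] by force
  have "circle_interp d b off z - (cmod (poly P z))\<^sup>2 = Re w"
    using circle_kernel_interpolates[OF assms(1-3)]
    by (simp add: w_def circle_interp_def left_diff_distrib sum_subtractf)
  also have "\<bar>Re w\<bar> \<le> (\<Sum>j<2*d - 1. cmod (of_real (b (off + j + 1) - (cmod (poly P (circle_point d j)))\<^sup>2)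
    * circle_kernel d j z))"
    unfolding w_def by (rule order_trans[OF abs_Re_le_cmod norm_sum])
  also have "\<dots> \<le> (\<Sum>j<2*d - 1. e * 1)"
    unfolding norm_mult norm_of_real
    by (intro sum_mono mult_mono) (use assms \<open>e \<ge> 0\<close> norm_circle_kernel_le_1 in auto)
  finally show ?thesis by simp
qed

lemma sup_norm_ge: "1 \<le> k \<Longrightarrow> k \<le> 6*d - 3 \<Longrightarrow> \<bar>eps k\<bar> \<le> sup_norm d eps"
  unfolding sup_norm_def by (intro Max_ge) auto

lemma sup_norm_nonneg: "d > 0 \<Longrightarrow> sup_norm d eps \<ge> 0"
  using sup_norm_ge[of 1 d eps] by fastforce

lemma measA_noisy_blocks:
  assumes "d > 0" "j < 2*d - 1"
  shows "measA_noisy d p eps (j + 1) = (cmod (poly p (circle_point d j)))\<^sup>2 + eps (j + 1)"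
    and "measA_noisy d p eps ((2*d - 1) + j + 1)
      = (cmod (poly p (circle_point d j) - poly p (circle_point d j * nu d)))\<^sup>2 + eps ((2*d - 1) + j + 1)"
    and "measA_noisy d p eps (2*(2*d - 1) + j + 1)
      = (cmod (poly p (circle_point d j) - \<i> * poly p (circle_point d j * nu d)))\<^sup>2
        + eps (2*(2*d - 1) + j + 1)"
proof -
  have "omega d ^ (k*(2*d - 1) + j + 1) = circle_point d j" for k
    using omega_power_period[OF assms(1)]
    by (simp add: circle_point_def power_add power_mult mult.commute[of k])
  from this[of 0] this[of 1] this[of 2] assms show
    "measA_noisy d p eps (j + 1) = (cmod (poly p (circle_point d j)))\<^sup>2 + eps (j + 1)"
    "measA_noisy d p eps ((2*d - 1) + j + 1)
      = (cmod (poly p (circle_point d j) - poly p (circle_point d j * nu d)))\<^sup>2 + eps ((2*d - 1) + j + 1)"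
    "measA_noisy d p eps (2*(2*d - 1) + j + 1)
      = (cmod (poly p (circle_point d j) - \<i> * poly p (circle_point d j * nu d)))\<^sup>2
        + eps (2*(2*d - 1) + j + 1)"
    unfolding measA_noisy_def measA_def by auto
qed

definition intensity_est :: "nat \<Rightarrow> (nat \<Rightarrow> real) \<Rightarrow> complex \<Rightarrow> real" where
  "intensity_est d b z = circle_interp d b 0 z"

(* By polarization, an estimate of a * cnj c for a = p z, c = p (nu d * z). *)
definition cross_est :: "nat \<Rightarrow> (nat \<Rightarrow> real) \<Rightarrow> complex \<Rightarrow> complex" where
  "cross_est d b z =
     ((1 + \<i>) * (of_real (intensity_est d b z) + of_real (intensity_est d b (nu d * z)))
      - (of_real (circle_interp d b (2*d - 1) z) + \<i> * of_real (circle_interp d b (2*(2*d - 1)) z))) / 2"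

lemma polarization_cnj:
  fixes a c :: complex
  shows "2 * (a * cnj c) = (1 + \<i>) * (of_real ((cmod a)\<^sup>2) + of_real ((cmod c)\<^sup>2))
     - (of_real ((cmod (a - c))\<^sup>2) + \<i> * of_real ((cmod (a - \<i> * c))\<^sup>2))"
  by (simp only: complex_norm_square) (simp add: algebra_simps)

lemma polarization_cnj_error:
  fixes a c :: complex and f1 f2 g1 g2 \<eta> :: real
  assumes "\<bar>f1 - (cmod a)\<^sup>2\<bar> \<le> \<eta>" "\<bar>f2 - (cmod c)\<^sup>2\<bar> \<le> \<eta>"
    "\<bar>g1 - (cmod (a - c))\<^sup>2\<bar> \<le> \<eta>" "\<bar>g2 - (cmod (a - \<i> * c))\<^sup>2\<bar> \<le> \<eta>"
  shows "cmod (((1 + \<i>) * (of_real f1 + of_real f2) - (of_real g1 + \<i> * of_real g2)) / 2 - a * cnj c)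
     \<le> (1 + sqrt 2) * \<eta>"
proof -
  define e1 e2 e3 e4 where "e1 = f1 - (cmod a)\<^sup>2" and "e2 = f2 - (cmod c)\<^sup>2"
    and "e3 = g1 - (cmod (a - c))\<^sup>2" and "e4 = g2 - (cmod (a - \<i> * c))\<^sup>2"
  have "((1 + \<i>) * (of_real f1 + of_real f2) - (of_real g1 + \<i> * of_real g2)) / 2 - a * cnj c
      = ((1 + \<i>) * (of_real e1 + of_real e2) - (of_real e3 + \<i> * of_real e4)) / 2"
  proof -
    have linear: "((1+\<i>)*(u1+u2) - (u3 + \<i> * u4))/2 - ((1+\<i>)*(v1+v2) - (v3 + \<i> * v4))/2
       = ((1+\<i>)*((u1-v1)+(u2-v2)) - ((u3-v3) + \<i> * (u4-v4)))/2" for u1 u2 u3 u4 v1 v2 v3 v4 :: complex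
      by (simp add: field_simps)
    have "a * cnj c = ((1 + \<i>) * (of_real ((cmod a)\<^sup>2) + of_real ((cmod c)\<^sup>2))
     - (of_real ((cmod (a - c))\<^sup>2) + \<i> * of_real ((cmod (a - \<i> * c))\<^sup>2))) / 2"
      using polarization_cnj[of a c] by (metis nonzero_mult_div_cancel_left zero_neq_numeral)
    then show ?thesis unfolding e1_def e2_def e3_def e4_def of_real_diff by (simp only: linear)
  qed
  also have "cmod \<dots> \<le> (cmod (1 + \<i>) * (\<bar>e1\<bar> + \<bar>e2\<bar>) + (\<bar>e3\<bar> + \<bar>e4\<bar>)) / 2"
  proof -
    have "cmod (of_real e1 + of_real e2) \<le> \<bar>e1\<bar> + \<bar>e2\<bar>"
      using norm_triangle_ineq[of "of_real e1" "of_real e2 :: complex"] by simp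
    then have "cmod ((1 + \<i>) * (of_real e1 + of_real e2)) \<le> cmod (1 + \<i>) * (\<bar>e1\<bar> + \<bar>e2\<bar>)"
      unfolding norm_mult by (rule mult_left_mono) simp
    moreover have "cmod (of_real e3 + \<i> * of_real e4) \<le> \<bar>e3\<bar> + \<bar>e4\<bar>"
      using norm_triangle_ineq[of "of_real e3" "\<i> * of_real e4 :: complex"] by (simp add: norm_mult)
    ultimately show ?thesis
      using norm_triangle_ineq4[of "(1 + \<i>) * (of_real e1 + of_real e2)" "of_real e3 + \<i> * of_real e4"]
      by (simp add: norm_divide)
  qed
  also have "\<dots> \<le> (sqrt 2 * (\<eta> + \<eta>) + (\<eta> + \<eta>)) / 2"
    using assms unfolding e1_def e2_def e3_def e4_def
    by (intro divide_right_mono add_mono mult_left_mono) (auto simp: cmod_def)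
  also have "\<dots> = (1 + sqrt 2) * \<eta>" by (simp add: algebra_simps)
  finally show ?thesis .
qed

lemma degree_sub_smult_pcompose_nu:
  fixes p :: "complex poly"
  assumes "degree p < d"
  shows "degree (p - smult c (pcompose p [:0, nu d:])) < d"
proof -
  have "nu d \<noteq> 0" unfolding nu_def by simp
  then have "degree (pcompose p [:0, nu d:]) = degree p" by (simp add: degree_pcompose)
  then have "degree (smult c (pcompose p [:0, nu d:])) \<le> degree p"
    using degree_smult_le[of c "pcompose p [:0, nu d:]"] by simp
  then show ?thesis
    using assms degree_diff_le_max[of p "smult c (pcompose p [:0, nu d:])"] by simp
qed

(* Block k of the measurements samples |p z - c * p (z * nu d)|^2 with c = 0, 1, \<i> for k = 0, 1, 2. *)
lemma measA_noisy_interp_error: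
  fixes p :: "complex poly"
  assumes "d > 0" "degree p < d" "cmod z = 1" "k < 3"
  shows "\<bar>circle_interp d (measA_noisy d p eps) (k * (2*d - 1)) z
          - (cmod (poly p z - [0, 1, \<i>] ! k * poly p (z * nu d)))\<^sup>2\<bar>
    \<le> real (2*d - 1) * sup_norm d eps"
proof -
  define P where "P = p - smult ([0, 1, \<i>] ! k) (pcompose p [:0, nu d:])"
  have "\<bar>measA_noisy d p eps (k * (2*d - 1) + j + 1) - (cmod (poly P (circle_point d j)))\<^sup>2\<bar>
      \<le> sup_norm d eps" if "j < 2*d - 1" for j
  proof -
    have "k * (2*d - 1) \<le> 2 * (2*d - 1)" using assms(4) by (intro mult_le_mono1) simp
    then have "\<bar>eps (k * (2*d - 1) + j + 1)\<bar> \<le> sup_norm d eps"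
      by (intro sup_norm_ge) (use that in linarith)+
    moreover have "k = 0 \<or> k = 1 \<or> k = 2" using assms(4) by auto
    ultimately show ?thesis
      using measA_noisy_blocks[OF assms(1) that, of p eps]
      by (auto simp: P_def poly_pcompose mult_ac)
  qed
  then have "\<bar>circle_interp d (measA_noisy d p eps) (k * (2*d - 1)) z - (cmod (poly P z))\<^sup>2\<bar>
      \<le> real (2*d - 1) * sup_norm d eps"
    using assms by (intro circle_interp_error) (auto simp: P_def degree_sub_smult_pcompose_nu)
  then show ?thesis by (simp add: P_def poly_pcompose mult_ac)
qed

lemma measA_noisy_intensity_error:
  fixes p :: "complex poly"
  assumes "d > 0" "degree p < d" "cmod z = 1"
  shows "\<bar>intensity_est d (measA_noisy d p eps) z - (cmod (poly p z))\<^sup>2\<bar> \<le> real (2*d - 1) * sup_norm d eps"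
  using measA_noisy_interp_error[OF assms, of 0 eps] by (simp add: intensity_est_def)

lemma measA_noisy_cross_error:
  fixes p :: "complex poly"
  assumes "d > 0" "degree p < d" "cmod z = 1"
  shows "cmod (cross_est d (measA_noisy d p eps) z - poly p z * cnj (poly p (nu d * z)))
    \<le> (1 + sqrt 2) * (real (2*d - 1) * sup_norm d eps)"
proof -
  have "cmod (nu d * z) = 1" using assms(3) by (simp add: norm_mult)
  then show ?thesis
    unfolding cross_est_def
    using measA_noisy_intensity_error[OF assms(1,2)] assms(3)
      measA_noisy_interp_error[OF assms, of 1 eps] measA_noisy_interp_error[OF assms, of 2 eps]
    by (intro polarization_cnj_error) (simp_all add: mult.commute)
qed

section \<open>The reconstruction map\<close>

definition orbit_min_intensity :: "nat \<Rightarrow> (nat \<Rightarrow> real) \<Rightarrow> complex \<Rightarrow> real" where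
  "orbit_min_intensity d b z = Min ((\<lambda>i. intensity_est d b (orbit d z i)) ` {..<d})"

(* The base point maximizes the smallest estimated intensity along its orbit, so that all values of p used
   below stay away from zero; such a point exists by compactness of the circle. *)
definition base_point :: "nat \<Rightarrow> (nat \<Rightarrow> real) \<Rightarrow> complex" where
  "base_point d b = (SOME z. cmod z = 1 \<and>
     (\<forall>w. cmod w = 1 \<longrightarrow> orbit_min_intensity d b w \<le> orbit_min_intensity d b z))"

primrec phase_est :: "nat \<Rightarrow> (nat \<Rightarrow> real) \<Rightarrow> nat \<Rightarrow> complex" where
  "phase_est d b 0 = 1"
| "phase_est d b (Suc i) = sgn (cnj (cross_est d b (orbit d (base_point d b) i))) * phase_est d b i"

definition value_est :: "nat \<Rightarrow> (nat \<Rightarrow> real) \<Rightarrow> nat \<Rightarrow> complex" where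
  "value_est d b i =
     of_real (sqrt (max 0 (intensity_est d b (orbit d (base_point d b) i)))) * phase_est d b i"

definition reconstruct :: "nat \<Rightarrow> (nat \<Rightarrow> real) \<Rightarrow> complex poly" where
  "reconstruct d b = orbit_interp_poly d (base_point d b) (value_est d b)"

lemma continuous_on_orbit_min_intensity: "d > 0 \<Longrightarrow> continuous_on S (orbit_min_intensity d b)"
  unfolding orbit_min_intensity_def intensity_est_def circle_interp_def circle_kernel_def orbit_def
  by (intro continuous_on_Min_family continuous_intros) auto

lemma base_point:
  assumes "d > 0"
  shows "cmod (base_point d b) = 1"
    and "cmod w = 1 \<Longrightarrow> orbit_min_intensity d b w \<le> orbit_min_intensity d b (base_point d b)"
proof -
  have "\<exists>z\<in>sphere 0 1. \<forall>w\<in>sphere 0 1. orbit_min_intensity d b w \<le> orbit_min_intensity d b z"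
    using assms by (intro continuous_attains_sup continuous_on_orbit_min_intensity) auto
  then have "\<exists>z. cmod z = 1 \<and> (\<forall>w. cmod w = 1 \<longrightarrow> orbit_min_intensity d b w \<le> orbit_min_intensity d b z)"
    by auto
  from someI_ex[OF this] show "cmod (base_point d b) = 1"
    and "cmod w = 1 \<Longrightarrow> orbit_min_intensity d b w \<le> orbit_min_intensity d b (base_point d b)"
    unfolding base_point_def by auto
qed

lemma degree_reconstruct: "d > 0 \<Longrightarrow> degree (reconstruct d b) < d"
  unfolding reconstruct_def by (rule degree_orbit_interp_poly)

lemma norm_phase_est_le_1: "cmod (phase_est d b i) \<le> 1"
proof (induction i)
  case (Suc i)
  then show ?case by (simp add: norm_mult norm_sgn mult_le_one)
qed simp

locale approx_measurements =
  fixes d :: nat and p :: "complex poly" and b :: "nat \<Rightarrow> real" and \<eta> :: real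
  assumes d_pos: "d > 0" and degree_p: "degree p < d"
    and intensity_error: "\<And>z. cmod z = 1 \<Longrightarrow> \<bar>intensity_est d b z - (cmod (poly p z))\<^sup>2\<bar> \<le> \<eta>"
    and cross_error: "\<And>z. cmod z = 1 \<Longrightarrow>
      cmod (cross_est d b z - poly p z * cnj (poly p (nu d * z))) \<le> (1 + sqrt 2) * \<eta>"
begin

abbreviation sample_point :: "nat \<Rightarrow> complex" where
  "sample_point \<equiv> orbit d (base_point d b)"

lemma noise_nonneg: "\<eta> \<ge> 0"
  using intensity_error[of 1] by simp

lemma norm_sample_point: "cmod (sample_point i) = 1"
  using base_point(1)[OF d_pos] by (rule norm_orbit)

lemma intensity_est_sample_point_ge:
  assumes "cmod z0 = 1" "\<And>i. i < d \<Longrightarrow> t + \<eta> \<le> (cmod (poly p (orbit d z0 i)))\<^sup>2" "i < d"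
  shows "t \<le> intensity_est d b (sample_point i)"
proof -
  have "t \<le> intensity_est d b (orbit d z0 j)" if "j < d" for j
    using intensity_error[OF norm_orbit[OF assms(1), of d j]] assms(2)[OF that] by linarith
  then have "t \<le> orbit_min_intensity d b z0"
    unfolding orbit_min_intensity_def using d_pos by (intro Min.boundedI) auto
  also have "\<dots> \<le> orbit_min_intensity d b (base_point d b)" by (rule base_point(2)[OF d_pos assms(1)])
  also have "\<dots> \<le> intensity_est d b (sample_point i)"
    unfolding orbit_min_intensity_def using assms(3) by (intro Min_le) auto
  finally show ?thesis .
qed

lemma phase_est_error:
  assumes "\<mu> > 0" and lower: "\<And>i. i < d \<Longrightarrow> \<mu> \<le> (cmod (poly p (sample_point i)))\<^sup>2"
    and "c = cnj (sgn (poly p (sample_point 0)))" and "i < d"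
  shows "cmod (phase_est d b i - sgn (c * poly p (sample_point i))) \<le> real i * (2 * (1 + sqrt 2) * \<eta> / \<mu>)"
  using \<open>i < d\<close>
proof (induction i)
  case 0
  have "poly p (sample_point 0) \<noteq> 0" using lower[of 0] d_pos \<open>\<mu> > 0\<close> by auto
  then show ?case using assms(3) by (simp add: sgn_cnj_sgn_mult_self)
next
  case (Suc i)
  define G where "G = poly p (sample_point i) * cnj (poly p (sample_point (Suc i)))"
  define G' where "G' = cross_est d b (sample_point i)"
  have sqrt_le: "sqrt \<mu> \<le> cmod (poly p (sample_point j))" if "j < d" for j
    using real_sqrt_le_mono[OF lower[OF that]] by simp
  have "sqrt \<mu> * sqrt \<mu> \<le> cmod (poly p (sample_point i)) * cmod (poly p (sample_point (Suc i)))"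
    using sqrt_le[of i] sqrt_le[of "Suc i"] Suc.prems \<open>\<mu> > 0\<close> by (intro mult_mono) auto
  then have "\<mu> \<le> cmod G" unfolding G_def using \<open>\<mu> > 0\<close> by (simp add: norm_mult)
  moreover have "cmod (G' - G) \<le> (1 + sqrt 2) * \<eta>"
    unfolding G_def G'_def using cross_error[OF norm_sample_point, of i] by (simp add: nu_mult_orbit)
  ultimately have step: "cmod (sgn (cnj G') - sgn (cnj G)) \<le> 2 * ((1 + sqrt 2) * \<eta>) / \<mu>"
    by (rule norm_sgn_cnj_diff_le[OF \<open>\<mu> > 0\<close>])
  have "poly p (sample_point i) \<noteq> 0" using sqrt_le[of i] Suc.prems \<open>\<mu> > 0\<close> by auto
  then have sgn_next: "sgn (c * poly p (sample_point (Suc i)))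
      = sgn (cnj G) * sgn (c * poly p (sample_point i))"
    unfolding G_def by (rule sgn_mult_eq_sgn_cross_mult)
  have "cmod (phase_est d b (Suc i) - sgn (c * poly p (sample_point (Suc i))))
      = cmod (sgn (cnj G') * phase_est d b i - sgn (cnj G) * sgn (c * poly p (sample_point i)))"
    by (simp only: phase_est.simps(2) G'_def sgn_next)
  also have "\<dots> \<le> cmod (sgn (cnj G') - sgn (cnj G)) * cmod (phase_est d b i)
      + cmod (sgn (cnj G)) * cmod (phase_est d b i - sgn (c * poly p (sample_point i)))"
    by (rule norm_mult_diff_mult_le)
  also have "\<dots> \<le> 2 * ((1 + sqrt 2) * \<eta>) / \<mu> * 1 + 1 * (real i * (2 * (1 + sqrt 2) * \<eta> / \<mu>))"
    using step Suc norm_phase_est_le_1[of d b i] noise_nonneg \<open>\<mu> > 0\<close>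
    by (intro add_mono mult_mono) (auto simp: norm_sgn)
  also have "\<dots> = real (Suc i) * (2 * (1 + sqrt 2) * \<eta> / \<mu>)"
    using \<open>\<mu> > 0\<close> by (simp add: field_simps)
  finally show ?case .
qed

lemma value_est_error:
  assumes "t > 0" "t \<le> intensity_est d b (sample_point i)" "cmod c = 1"
  shows "cmod (value_est d b i - c * poly p (sample_point i))
    \<le> \<eta> / sqrt t + cmod (poly p (sample_point i)) * cmod (phase_est d b i - sgn (c * poly p (sample_point i)))"
proof -
  define F where "F = intensity_est d b (sample_point i)"
  define s where "s = cmod (poly p (sample_point i))"
  define u where "u = sgn (c * poly p (sample_point i))"
  have F_pos: "F > 0" using assms(1,2) unfolding F_def by linarith
  have polar: "of_real (cmod w) * sgn w = w" for w :: complex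
    by (cases "w = 0") (simp_all add: sgn_eq)
  have "c * poly p (sample_point i) = of_real s * u"
    using polar[of "c * poly p (sample_point i)"] assms(3) unfolding s_def u_def by (simp add: norm_mult)
  moreover have "value_est d b i = of_real (sqrt F) * phase_est d b i"
    unfolding value_est_def F_def using F_pos[unfolded F_def] by simp
  ultimately have "cmod (value_est d b i - c * poly p (sample_point i))
      \<le> \<bar>sqrt F - s\<bar> * cmod (phase_est d b i) + s * cmod (phase_est d b i - u)"
    using norm_mult_diff_mult_le[of "of_real (sqrt F)" "phase_est d b i" "of_real s" u]
    by (simp add: s_def flip: of_real_diff)
  moreover have "\<bar>sqrt F - s\<bar> \<le> \<eta> / sqrt t"
  proof -
    have "\<bar>sqrt F - s\<bar> = \<bar>sqrt F - sqrt (s\<^sup>2)\<bar>" unfolding s_def by simp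
    also have "\<dots> \<le> \<bar>F - s\<^sup>2\<bar> / sqrt F" using F_pos by (intro abs_sqrt_diff_le) auto
    also have "\<dots> \<le> \<eta> / sqrt t"
      using intensity_error[OF norm_sample_point, of i] assms(1,2) noise_nonneg
      unfolding F_def s_def by (intro frac_le) auto
    finally show ?thesis .
  qed
  then have "\<bar>sqrt F - s\<bar> * cmod (phase_est d b i) \<le> \<eta> / sqrt t * 1"
    using norm_phase_est_le_1[of d b i] noise_nonneg assms(1) by (intro mult_mono) auto
  ultimately show ?thesis unfolding u_def s_def by linarith
qed

lemma norm2_reconstruct_diff_le:
  "norm2 d (reconstruct d b - smult c p)
    \<le> (\<Sum>i<d. cmod (value_est d b i - c * poly p (sample_point i))) / sqrt (real d)"
proof -
  have "reconstruct d b - smult c p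
      = orbit_interp_poly d (base_point d b) (\<lambda>i. value_est d b i - c * poly p (sample_point i))"
    unfolding reconstruct_def orbit_interp_poly_diff
    using orbit_interp_poly_of_values[OF d_pos degree_p base_point(1)[OF d_pos]] by simp
  then show ?thesis using norm2_orbit_interp_poly_le[OF d_pos base_point(1)[OF d_pos]] by simp
qed

lemma value_est_errors_small_noise:
  assumes "cmod z0 = 1" "m > 0" "p \<noteq> 0"
    and orbit_lower: "\<And>i. i < d \<Longrightarrow> m * (norm2 d p)\<^sup>2 + \<eta> \<le> (cmod (poly p (orbit d z0 i)))\<^sup>2"
    and small: "\<eta> < m * (norm2 d p)\<^sup>2 / 2"
  shows "\<exists>c. cmod c = 1 \<and> (\<forall>i<d. cmod (value_est d b i - c * poly p (sample_point i))
    \<le> \<eta> / (sqrt m * norm2 d p) + sqrt (real d) * norm2 d p * (real i * (4 * (1 + sqrt 2) * \<eta> / (m * (norm2 d p)\<^sup>2))))"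
proof -
  define r where "r = norm2 d p"
  define \<mu> where "\<mu> = m * r\<^sup>2 / 2"
  define c where "c = cnj (sgn (poly p (sample_point 0)))"
  have r: "r > 0" unfolding r_def using norm2_pos[OF assms(3) degree_p] .
  have \<mu>: "\<mu> > 0" unfolding \<mu>_def using r assms(2) by simp
  have F_ge: "m * r\<^sup>2 \<le> intensity_est d b (sample_point i)" if "i < d" for i
    using intensity_est_sample_point_ge[OF assms(1) _ that] orbit_lower unfolding r_def by blast
  have p_ge: "\<mu> \<le> (cmod (poly p (sample_point i)))\<^sup>2" if "i < d" for i
    using F_ge[OF that] intensity_error[OF norm_sample_point, of i] small unfolding \<mu>_def r_def by linarith
  then have "poly p (sample_point 0) \<noteq> 0" using \<mu> d_pos by fastforce
  then have c: "cmod c = 1" unfolding c_def by (simp add: norm_sgn)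
  have "cmod (value_est d b i - c * poly p (sample_point i))
      \<le> \<eta> / (sqrt m * r) + sqrt (real d) * r * (real i * (4 * (1 + sqrt 2) * \<eta> / (m * r\<^sup>2)))"
    if "i < d" for i
  proof -
    have "cmod (poly p (sample_point i)) \<le> sqrt (real d) * r"
      using real_sqrt_le_mono[OF cmod_poly_squared_le[OF d_pos degree_p norm_sample_point, of i]] r
      unfolding r_def by (simp add: real_sqrt_mult)
    moreover have "cmod (phase_est d b i - sgn (c * poly p (sample_point i)))
        \<le> real i * (4 * (1 + sqrt 2) * \<eta> / (m * r\<^sup>2))"
      using phase_est_error[OF \<mu> p_ge c_def that] unfolding \<mu>_def by (simp add: algebra_simps)
    ultimately have "cmod (poly p (sample_point i)) * cmod (phase_est d b i - sgn (c * poly p (sample_point i)))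
        \<le> sqrt (real d) * r * (real i * (4 * (1 + sqrt 2) * \<eta> / (m * r\<^sup>2)))"
      using r by (intro mult_mono) auto
    moreover have "sqrt (m * r\<^sup>2) = sqrt m * r" using r by (simp add: real_sqrt_mult)
    ultimately show ?thesis
      using value_est_error[of "m * r\<^sup>2" i c] F_ge[OF that] assms(2) r c by fastforce
  qed
  then show ?thesis using c unfolding r_def by blast
qed

lemma reconstruct_error_small_noise:
  assumes "cmod z0 = 1" "m > 0" "p \<noteq> 0"
    and "\<And>i. i < d \<Longrightarrow> m * (norm2 d p)\<^sup>2 + \<eta> \<le> (cmod (poly p (orbit d z0 i)))\<^sup>2"
    and "\<eta> < m * (norm2 d p)\<^sup>2 / 2"
  shows "\<exists>c. cmod c = 1 \<and> norm2 d (reconstruct d b - smult c p)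
    \<le> sqrt (real d) * \<eta> / (sqrt m * norm2 d p) + 2 * (1 + sqrt 2) * real d * (real d - 1) * \<eta> / (m * norm2 d p)"
proof -
  define r where "r = norm2 d p"
  define K where "K = 4 * (1 + sqrt 2) * \<eta> / (m * r\<^sup>2)"
  have r: "r > 0" unfolding r_def using norm2_pos[OF assms(3) degree_p] .
  obtain c where c: "cmod c = 1" and err: "\<And>i. i < d \<Longrightarrow> cmod (value_est d b i - c * poly p (sample_point i))
      \<le> \<eta> / (sqrt m * r) + sqrt (real d) * r * (real i * K)"
    using value_est_errors_small_noise[OF assms] unfolding r_def K_def by blast
  have "norm2 d (reconstruct d b - smult c p)
      \<le> (\<Sum>i<d. \<eta> / (sqrt m * r) + sqrt (real d) * r * (real i * K)) / sqrt (real d)"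
    using err by (intro order_trans[OF norm2_reconstruct_diff_le] divide_right_mono sum_mono) auto
  also have "(\<Sum>i<d. \<eta> / (sqrt m * r) + sqrt (real d) * r * (real i * K))
      = real d * (\<eta> / (sqrt m * r)) + sqrt (real d) * r * K * (real d * (real d - 1) / 2)"
    by (simp add: sum.distrib sum_distrib_left mult_ac flip: real_sum_lessThan_id)
  also have "(\<dots>) / sqrt (real d)
      = sqrt (real d) * \<eta> / (sqrt m * r) + 2 * (1 + sqrt 2) * real d * (real d - 1) * \<eta> / (m * r)"
    using real_sqrt_mult_self[of "real d"] r assms(2) d_pos
    unfolding K_def by (simp add: field_simps power2_eq_square)
  finally show ?thesis using c unfolding r_def by blast
qed

lemma reconstruct_error_large_noise:
  assumes "\<eta> \<le> (norm2 d p)\<^sup>2"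
  shows "norm2 d (reconstruct d b - p) \<le> sqrt (real d * (real d + 1)) * norm2 d p + norm2 d p"
proof -
  define r where "r = norm2 d p"
  have "r \<ge> 0" unfolding r_def norm2_def by (simp add: sum_nonneg)
  have "cmod (value_est d b i) \<le> sqrt ((real d + 1) * r\<^sup>2)" for i
  proof -
    have "intensity_est d b (sample_point i) \<le> (cmod (poly p (sample_point i)))\<^sup>2 + \<eta>"
      using intensity_error[OF norm_sample_point, of i] by linarith
    also have "\<dots> \<le> (real d + 1) * r\<^sup>2"
      using cmod_poly_squared_le[OF d_pos degree_p norm_sample_point, of i] assms
      unfolding r_def by (simp add: algebra_simps)
    finally have "max 0 (intensity_est d b (sample_point i)) \<le> (real d + 1) * r\<^sup>2" by simp
    then have "sqrt (max 0 (intensity_est d b (sample_point i))) * cmod (phase_est d b i)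
        \<le> sqrt ((real d + 1) * r\<^sup>2) * 1"
      using norm_phase_est_le_1[of d b i] by (intro mult_mono) auto
    then show ?thesis by (simp add: value_est_def norm_mult)
  qed
  then have "norm2 d (reconstruct d b) \<le> (\<Sum>i<d. sqrt ((real d + 1) * r\<^sup>2)) / sqrt (real d)"
    unfolding reconstruct_def
    by (intro order_trans[OF norm2_orbit_interp_poly_le[OF d_pos base_point(1)[OF d_pos]]]
        divide_right_mono sum_mono) auto
  also have "\<dots> = sqrt (real d * (real d + 1)) * r"
  proof -
    have "sqrt ((real d + 1) * r\<^sup>2) = sqrt (real d + 1) * r"
      using \<open>r \<ge> 0\<close> by (simp add: real_sqrt_mult)
    moreover have "real d / sqrt (real d) = sqrt (real d)" by (rule real_div_sqrt) simp
    ultimately show ?thesis by (simp add: real_sqrt_mult) (metis mult.assoc times_divide_eq_left)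
  qed
  finally show ?thesis using norm2_diff_le[of d "reconstruct d b" p] unfolding r_def by linarith
qed

end

lemma measA_noisy_approx_measurements:
  assumes "d > 0" "degree p < d"
  shows "approx_measurements d p (measA_noisy d p eps) (real (2*d - 1) * sup_norm d eps)"
  using assms measA_noisy_intensity_error measA_noisy_cross_error by unfold_locales

definition c_tilde :: "nat \<Rightarrow> real \<Rightarrow> real \<Rightarrow> real \<Rightarrow> real" where
  "c_tilde d m r s = ((1 + sqrt 2) * sqrt (real d) * real (2*d - 1) * s + real d * r\<^sup>2) / (sqrt (real d) * m * r\<^sup>2)"

definition error_bound :: "nat \<Rightarrow> real \<Rightarrow> real \<Rightarrow> real \<Rightarrow> real" where
  "error_bound d m r s = (let C = c_tilde d m r s in
     ((2 + sqrt 2) / m * ((real d - real d * C - 1 + C ^ d) / (1 - C)) * sqrt (real d)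
       + (1 - C ^ d) / (2 * sqrt (m / sqrt (real d))))
     * (real d * real (2*d - 1) / (1 - C)) * (s / r))"

(* As m <= 1 by Parseval, the constant always exceeds 1; so the hypothesis Ct \<noteq> 1 of the theorem is
   automatic, and 1 - Ct and the bracketed factor of the error bound are both negative. *)
lemma c_tilde_gt_1:
  assumes "d \<ge> 2" "0 < m" "m \<le> 1" "r > 0" "s \<ge> 0"
  shows "c_tilde d m r s > 1"
proof -
  have "sqrt (real d) \<ge> sqrt 2" using assms(1) by simp
  moreover have "sqrt 2 > 1" by simp
  moreover have "c_tilde d m r s \<ge> (real d * r\<^sup>2) / (sqrt (real d) * m * r\<^sup>2)"
    unfolding c_tilde_def using assms by (intro divide_right_mono) auto
  moreover have "(real d * r\<^sup>2) / (sqrt (real d) * m * r\<^sup>2) = sqrt (real d) / m"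
    using assms real_sqrt_mult_self[of "real d"] by (simp add: field_simps power2_eq_square)
  moreover have "sqrt (real d) / m \<ge> sqrt (real d)" using assms by (simp add: le_divide_eq)
  ultimately show ?thesis by linarith
qed

lemma error_bound_ge:
  assumes "d \<ge> 2" "0 < m" "m \<le> 1" "r > 0" "s \<ge> 0"
  shows "error_bound d m r s \<ge> ((2 + sqrt 2) * sqrt (real d) * (real d * (real d - 1) / 2) / m
      + real d / (2 * sqrt (m / sqrt (real d)))) * real d * (real (2*d - 1) * s) / r"
proof -
  define C where "C = c_tilde d m r s"
  define h where "h = C - 1"
  define D where "D = real d"
  define N where "N = real (2*d - 1)"
  define w where "w = sqrt (m / sqrt D)"
  have h: "h > 0" unfolding h_def C_def using c_tilde_gt_1[OF assms] by simp
  have w: "w > 0" unfolding w_def D_def using assms by simp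
  have N: "N \<ge> 0" unfolding N_def by simp
  have quad: "C ^ d - 1 - D * h \<ge> D * (D - 1) / 2 * h\<^sup>2"
    using one_plus_power_ge_quadratic[OF less_imp_le[OF h], of d] unfolding h_def D_def by simp
  have lin: "C ^ d - 1 \<ge> D * h"
    using Bernoulli_inequality[of h d] h unfolding h_def D_def by simp
  have C1: "C \<noteq> 1" using h unfolding h_def by simp
  have XZ: "(D - D * C - 1 + C ^ d) / (1 - C) * (D * N / (1 - C)) = (C ^ d - 1 - D * h) / h\<^sup>2 * (D * N)"
    using C1 unfolding h_def by (simp add: field_simps power2_eq_square)
  have YZ: "(1 - C ^ d) / (2 * w) * (D * N / (1 - C)) = (C ^ d - 1) / h * (D * N / (2 * w))"
    using C1 w unfolding h_def by (simp add: field_simps)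
  have regroup: "(a / m * X * q + Y) * Z * u = (a / m * q * (X * Z) + Y * Z) * u" for a X Y Z u q :: real
    by (simp add: algebra_simps)
  have "error_bound d m r s = ((2 + sqrt 2) / m * sqrt D * ((D - D * C - 1 + C ^ d) / (1 - C) * (D * N / (1 - C)))
      + (1 - C ^ d) / (2 * w) * (D * N / (1 - C))) * (s / r)"
    unfolding error_bound_def Let_def C_def[symmetric] D_def[symmetric] N_def[symmetric] w_def[symmetric]
    by (rule regroup)
  also have "\<dots> = ((2 + sqrt 2) / m * sqrt D * ((C ^ d - 1 - D * h) / h\<^sup>2 * (D * N))
      + (C ^ d - 1) / h * (D * N / (2 * w))) * (s / r)"
    by (simp only: XZ YZ)
  also have "\<dots> \<ge> ((2 + sqrt 2) / m * sqrt D * (D * (D - 1) / 2 * (D * N)) + D * (D * N / (2 * w))) * (s / r)"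
    using quad lin h w assms N unfolding D_def
    by (intro mult_right_mono add_mono mult_left_mono) (auto simp: le_divide_eq)
  finally show ?thesis unfolding D_def[symmetric] N_def[symmetric] w_def[symmetric]
    by (simp add: field_simps)
qed

lemma small_noise_bound_le_error_bound:
  assumes "d \<ge> 2" "0 < m" "m \<le> 1" "r > 0" "s \<ge> 0"
  defines "\<eta> \<equiv> real (2*d - 1) * s"
  shows "sqrt (real d) * \<eta> / (sqrt m * r) + 2 * (1 + sqrt 2) * real d * (real d - 1) * \<eta> / (m * r)
    \<le> error_bound d m r s"
proof -
  define D where "D = real d"
  define w where "w = sqrt (m / sqrt D)"
  have D: "D \<ge> 2" unfolding D_def using assms(1) by simp
  have "D \<le> D\<^sup>2" using mult_left_mono[of 1 D D] D by (simp add: power2_eq_square)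
  then have sqrt_D: "sqrt D \<ge> sqrt 2" "sqrt D \<le> D" "sqrt D * sqrt D = D"
    using D by (auto simp: real_sqrt_le_iff')
  have "sqrt 2 \<ge> 1" by simp
  have \<eta>: "\<eta> \<ge> 0" unfolding \<eta>_def using assms(5) by simp
  have w: "0 < w" "w \<le> sqrt m" unfolding w_def using assms(2) D sqrt_D(1) \<open>sqrt 2 \<ge> 1\<close>
    by (auto simp: divide_le_eq intro!: real_sqrt_le_mono)
  have "sqrt D * \<eta> / (sqrt m * r) \<le> (D * D / 2) * \<eta> / (w * r)"
  proof (rule frac_le)
    show "sqrt D * \<eta> \<le> D * D / 2 * \<eta>"
      using mult_mono[OF sqrt_D(2) D] D \<eta> by (intro mult_right_mono) (auto simp: field_simps)
  qed (use w \<eta> assms(2,4) D in auto)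
  also have "\<dots> = D / (2 * w) * D * \<eta> / r" by (simp add: field_simps)
  finally have first: "sqrt D * \<eta> / (sqrt m * r) \<le> D / (2 * w) * D * \<eta> / r" .
  have "4 * (1 + sqrt 2) \<le> (2 + sqrt 2) * (sqrt D * D)"
  proof -
    have "sqrt 2 * 2 \<le> sqrt D * D" using sqrt_D(1) D by (intro mult_mono) auto
    then have "(2 + sqrt 2) * (sqrt 2 * 2) \<le> (2 + sqrt 2) * (sqrt D * D)" by (intro mult_left_mono) auto
    then show ?thesis by (simp add: algebra_simps)
  qed
  moreover have "0 \<le> D * (D - 1) * \<eta> / (2 * m * r)" using D \<eta> assms(2,4) by simp
  ultimately have "4 * (1 + sqrt 2) * (D * (D - 1) * \<eta> / (2 * m * r))
      \<le> (2 + sqrt 2) * (sqrt D * D) * (D * (D - 1) * \<eta> / (2 * m * r))"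
    by (rule mult_right_mono)
  then have "2 * (1 + sqrt 2) * D * (D - 1) * \<eta> / (m * r)
      \<le> (2 + sqrt 2) * sqrt D * (D * (D - 1) / 2) / m * D * \<eta> / r"
    using assms(2,4) by (simp add: field_simps)
  with first show ?thesis
    using error_bound_ge[OF assms(1-5)] unfolding D_def[symmetric] w_def[symmetric] \<eta>_def[symmetric]
    by (simp add: add_divide_distrib distrib_right)
qed

lemma large_noise_bound_le_error_bound:
  assumes "d \<ge> 2" "0 < m" "m \<le> 1" "r > 0" "s \<ge> 0" "real (2*d - 1) * s \<ge> m * r\<^sup>2 / 2"
  shows "sqrt (real d * (real d + 1)) * r + r \<le> error_bound d m r s"
proof -
  define D where "D = real d"
  define \<eta> where "\<eta> = real (2*d - 1) * s"
  have D: "D \<ge> 2" unfolding D_def using assms(1) by simp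
  have "sqrt (D * (D + 1)) \<le> D + 1" using D by (intro real_le_lsqrt) (auto simp: power2_eq_square)
  then have "sqrt (D * (D + 1)) * r + r \<le> (D + 2) * r"
    using mult_right_mono[of _ _ r] assms(4) by (fastforce simp: algebra_simps)
  also have "\<dots> \<le> 4 * (D * D * (D - 1)) * (r / 4)"
  proof -
    have "4 * (D - 1) \<le> D * D * (D - 1)"
      using mult_mono[OF D D] D by (intro mult_right_mono) auto
    moreover have "D + 2 \<le> 4 * (D - 1)" using D by simp
    ultimately have "D + 2 \<le> D * D * (D - 1)" by (rule order_trans[rotated])
    then show ?thesis using mult_right_mono[of "D + 2" _ r] assms(4) by simp
  qed
  also have "\<dots> \<le> ((2 + sqrt 2) * sqrt D) * (D * D * (D - 1)) * (\<eta> / (2 * m * r))"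
  proof (intro mult_mono)
    have "sqrt D \<ge> sqrt 2" using D by simp
    then have "(2 + sqrt 2) * sqrt D \<ge> (2 + sqrt 2) * sqrt 2" by (intro mult_left_mono) auto
    moreover have "(2 + sqrt 2) * sqrt 2 = 2 * sqrt 2 + 2" by (simp add: algebra_simps)
    moreover have "sqrt 2 \<ge> 1" by simp
    ultimately show "4 \<le> (2 + sqrt 2) * sqrt D" by linarith
    show "r / 4 \<le> \<eta> / (2 * m * r)"
      using assms(2,4,6) unfolding \<eta>_def by (simp add: field_simps power2_eq_square)
  qed (use D assms(4) in auto)
  also have "\<dots> \<le> error_bound d m r s"
  proof -
    have "0 \<le> D / (2 * sqrt (m / sqrt D)) * D * \<eta> / r"
      using D assms(2,4,5) unfolding \<eta>_def by simp
    then show ?thesis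
      using error_bound_ge[OF assms(1-5)] unfolding D_def[symmetric] \<eta>_def[symmetric]
      by (simp add: add_divide_distrib distrib_right field_simps)
  qed
  finally show ?thesis unfolding D_def .
qed

lemma reconstruct_error:
  fixes p :: "complex poly"
  assumes "d \<ge> 2" "m > 0" "p \<noteq> 0" "degree p < d" "cmod z0 = 1"
    and orbit_lower: "\<And>i. i < d \<Longrightarrow>
      m * (norm2 d p)\<^sup>2 + real (2*d - 1) * sup_norm d eps \<le> (cmod (poly p (orbit d z0 i)))\<^sup>2"
  shows "\<exists>c. cmod c = 1 \<and>
    norm2 d (reconstruct d (measA_noisy d p eps) - smult c p) \<le> error_bound d m (norm2 d p) (sup_norm d eps)"
proof -
  define r where "r = norm2 d p"
  define s where "s = sup_norm d eps"
  define \<eta> where "\<eta> = real (2*d - 1) * s"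
  have d: "d > 0" using assms(1) by simp
  interpret approx_measurements d p "measA_noisy d p eps" \<eta>
    unfolding \<eta>_def s_def using d assms(4) by (rule measA_noisy_approx_measurements)
  have r: "r > 0" unfolding r_def using norm2_pos[OF assms(3,4)] .
  have s: "s \<ge> 0" unfolding s_def using sup_norm_nonneg[OF d] .
  have "m * r\<^sup>2 + \<eta> \<le> r\<^sup>2"
    unfolding r_def \<eta>_def s_def
    using orbit_lower_bound_le_norm2_squared[OF d assms(4,5) orbit_lower] by simp
  moreover have "0 \<le> m * r\<^sup>2" using assms(2) by simp
  ultimately have \<eta>_le: "\<eta> \<le> r\<^sup>2" and "m * r\<^sup>2 \<le> 1 * r\<^sup>2"
    using noise_nonneg by linarith+
  then have m1: "m \<le> 1" using r by (simp only: mult_le_cancel_right_pos zero_less_power)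
  show ?thesis
  proof (cases "\<eta> < m * r\<^sup>2 / 2")
    case True
    then obtain c where "cmod c = 1" and "norm2 d (reconstruct d (measA_noisy d p eps) - smult c p)
        \<le> sqrt (real d) * \<eta> / (sqrt m * r) + 2 * (1 + sqrt 2) * real d * (real d - 1) * \<eta> / (m * r)"
      using reconstruct_error_small_noise[OF assms(5,2,3)] orbit_lower
      unfolding r_def s_def \<eta>_def by blast
    then show ?thesis
      using small_noise_bound_le_error_bound[OF assms(1,2) m1 r s]
      unfolding r_def s_def \<eta>_def by (blast intro: order_trans)
  next
    case False
    then have "norm2 d (reconstruct d (measA_noisy d p eps) - smult 1 p) \<le> error_bound d m r s"
      using reconstruct_error_large_noise[OF \<eta>_le[unfolded r_def]]
        large_noise_bound_le_error_bound[OF assms(1,2) m1 r s]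
      unfolding r_def s_def \<eta>_def by simp
    then show ?thesis unfolding r_def s_def by (intro exI[of _ 1]) simp
  qed
qed

lemma Min_orbit_le:
  fixes f :: "complex \<Rightarrow> real"
  assumes "i < d"
  shows "Min ((\<lambda>j. f (nu d ^ j * z)) ` {1..d}) \<le> f (orbit d z i)"
  unfolding orbit_def using assms by (intro Min_le finite_imageI rev_image_eqI[of "i + 1"]) auto

lemma reconstruct_error_bound:
  fixes p :: "complex poly"
  assumes "d \<ge> 2" "m > 0" "p \<noteq> 0" "p \<in> Pd d" "cmod z0 = 1"
    and "m * (norm2 d p)\<^sup>2
      \<le> Min ((\<lambda>j. (cmod (poly p (nu d ^ j * z0)))\<^sup>2 - real (2*d - 1) * sup_norm d eps) ` {1..d})"
  shows "\<exists>c. cmod c = 1 \<and>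
    norm2 d (reconstruct d (measA_noisy d p eps) - smult c p) \<le> error_bound d m (norm2 d p) (sup_norm d eps)"
proof (rule reconstruct_error[OF assms(1-3) _ assms(5)])
  show "degree p < d" using assms(4) unfolding Pd_def by simp
next
  fix i assume "i < d"
  from Min_orbit_le[OF this, of "\<lambda>z. (cmod (poly p z))\<^sup>2 - real (2*d - 1) * sup_norm d eps" z0] assms(6)
  show "m * (norm2 d p)\<^sup>2 + real (2*d - 1) * sup_norm d eps \<le> (cmod (poly p (orbit d z0 i)))\<^sup>2"
    by linarith
qed

theorem mainTheorem12:
  fixes d :: nat and mt :: real
  assumes "d \<ge> 2" and "mt > 0"
  shows "\<exists>R :: (nat \<Rightarrow> real) \<Rightarrow> complex poly.
    (\<forall>b. R b \<in> Pd d) \<and>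
    (\<forall>(p :: complex poly) (eps :: nat \<Rightarrow> real).
      p \<in> Pd d \<longrightarrow> p \<noteq> 0 \<longrightarrow>
      (\<exists>z0. cmod z0 = 1 \<and>
         Min ((\<lambda>j. (cmod (poly p (nu d ^ j * z0)))\<^sup>2 - real (2*d - 1) * sup_norm d eps) ` {1..d})
           \<ge> mt * (norm2 d p)\<^sup>2) \<longrightarrow>
      (let Ct = ((1 + sqrt 2) * sqrt (real d) * real (2*d - 1) * sup_norm d eps
                   + real d * (norm2 d p)\<^sup>2) / (sqrt (real d) * mt * (norm2 d p)\<^sup>2)
       in Ct \<noteq> 1 \<longrightarrow>
          (\<exists>c0. cmod c0 = 1 \<and>
             norm2 d (R (measA_noisy d p eps) - smult c0 p) \<le>
             ((2 + sqrt 2) / mt * ((real d - real d * Ct - 1 + Ct ^ d) / (1 - Ct)) * sqrt (real d)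
               + (1 - Ct ^ d) / (2 * sqrt (mt / sqrt (real d))))
             * (real d * real (2*d - 1) / (1 - Ct)) * (sup_norm d eps / norm2 d p))))"
proof (unfold Let_def, intro exI[of _ "reconstruct d"] conjI allI impI)
  show "reconstruct d b \<in> Pd d" for b unfolding Pd_def using degree_reconstruct assms(1) by simp
qed (elim exE conjE, rule reconstruct_error_bound[OF assms, unfolded error_bound_def c_tilde_def Let_def];
  assumption)

end
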